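(* Let $\chi\geq 3$ and $m\geq \vec{R}(\chi)$ be integers, and let $H=H(TT_\chi,m)$. Then for every integer $n\ge 3$, $R(P^{(3)}_{n,2},H)\geq \left(\frac23 n-3\right)(\vec{R}(\chi)-1)+1$; in particular $R(P^{(3)}_{n,2},H)\geq (1+o(1))\frac23(\vec{R}(\chi)-1)n$ as $n\to\infty$.
   Context: $TT_\chi$ denotes the transitive tournament on $[\chi]$. For a tournament $T_\chi$ on $[\chi]$ and $m\ge1$, $H(T_\chi,m)$ is the $3$-uniform hypergraph whose vertex set is partitioned into sets $A_1,\dots,A_\chi$ each of size $m$, with edge set $\{xyz: x,y\in A_i,\ z\in A_j,\ (i,j)\text{ an arc of }T_\chi\}$. $\vec{R}(\ell)$ is the least $N$ such that every tournament on at least $N$ vertices contains a copy of $TT_\ell$. $R(G,H)$ is the least $N$ such that every red/blue colouring of the edges of $K^{(3)}_N$ contains a red copy of $G$ or a blue copy of $H$. The tight path $P^{(3)}_{n,2}$ has vertices $v_1,\dots,v_n$ and edges $\{v_i,v_{i+1},v_{i+2}\}$, $i\in[n-2]$. *)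

theory Defs
  imports Complex_Main
begin

definition tournament_on :: "'a set \<Rightarrow> ('a \<Rightarrow> 'a \<Rightarrow> bool) \<Rightarrow> bool" where
  "tournament_on V T \<longleftrightarrow>
     (\<forall>x\<in>V. \<not> T x x) \<and>
     (\<forall>x\<in>V. \<forall>y\<in>V. x \<noteq> y \<longrightarrow> (T x y \<longleftrightarrow> \<not> T y x))"

definition contains_TT :: "nat \<Rightarrow> 'a set \<Rightarrow> ('a \<Rightarrow> 'a \<Rightarrow> bool) \<Rightarrow> bool" where
  "contains_TT l V T \<longleftrightarrow>
     (\<exists>f. inj_on f {0..<l} \<and> f ` {0..<l} \<subseteq> V \<and>
          (\<forall>i<l. \<forall>j<l. i < j \<longrightarrow> T (f i) (f j)))"

definition dir_ramsey :: "nat \<Rightarrow> nat" where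
  "dir_ramsey l = (LEAST N. \<forall>M\<ge>N. \<forall>T :: nat \<Rightarrow> nat \<Rightarrow> bool.
       tournament_on {0..<M} T \<longrightarrow> contains_TT l {0..<M} T)"

(* A colouring of the edges of K^(3)_N on {0..<N} is a predicate on sets of
   vertices (only its values on 3-subsets matter).  "embeds VG EG N P" says there
   is a copy of (VG,EG) in K_N all of whose edges satisfy P. *)
definition embeds :: "'a set \<Rightarrow> 'a set set \<Rightarrow> nat \<Rightarrow> (nat set \<Rightarrow> bool) \<Rightarrow> bool" where
  "embeds VG EG N P \<longleftrightarrow>
     (\<exists>f. inj_on f VG \<and> f ` VG \<subseteq> {0..<N} \<and> (\<forall>e\<in>EG. P (f ` e)))"

(* R(G,H): least N such that every red/blue colouring of K^(3)_N has a red G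
   (red = True) or a blue H (blue = False). *)
definition ramsey3 :: "'a set \<Rightarrow> 'a set set \<Rightarrow> 'b set \<Rightarrow> 'b set set \<Rightarrow> nat" where
  "ramsey3 VG EG VH EH = (LEAST N. \<forall>c :: nat set \<Rightarrow> bool.
       embeds VG EG N c \<or> embeds VH EH N (\<lambda>e. \<not> c e))"

definition tight_path_V :: "nat \<Rightarrow> nat set" where
  "tight_path_V n = {0..<n}"

definition tight_path_E :: "nat \<Rightarrow> nat set set" where
  "tight_path_E n = {{i, i+1, i+2} | i. i + 2 < n}"

(* H(TT_chi, m): vertex classes A_i = {(i,k) | k < m}, i < chi; arcs of TT_chi
   are (i,j) with i < j. *)
definition HTT_V :: "nat \<Rightarrow> nat \<Rightarrow> (nat \<times> nat) set" where
  "HTT_V chi m = {0..<chi} \<times> {0..<m}"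

definition HTT_E :: "nat \<Rightarrow> nat \<Rightarrow> (nat \<times> nat) set set" where
  "HTT_E chi m = {{(i,k), (i,k'), (j,l)} | i j k k' l.
      i < j \<and> j < chi \<and> k < m \<and> k' < m \<and> l < m \<and> k \<noteq> k'}"

end

theory Submission
  imports Defs "HOL-Library.Ramsey"
begin

(* Let r = R(chi) - 1 and let T be a tournament on r vertices without a copy of TT_chi.
   Split r * s vertices, s = 2 floor(n/3) - 1, into r blocks of size s indexed by the vertices
   of T, and colour a triple blue if it meets three blocks, or if two of its vertices lie in a
   block p and the third in a block q with p -> q; all other triples are red.
   There is no blue H(TT_chi, m): as m > r, every class A_i has two vertices in one block p_i,
   and the blue edges between classes force p_i -> p_j for i < j, a TT_chi in T.
   There is no red tight path on n vertices: some block must contain two of every three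
   consecutive vertices of the path, hence at least 2 floor(n/3) > s of them.
   So R(P, H) > r s >= (2n/3 - 3) r. *)

lemma tournament_on_subset:
  "tournament_on V T \<Longrightarrow> W \<subseteq> V \<Longrightarrow> tournament_on W T"
  unfolding tournament_on_def by (meson subsetD)

lemma tournament_on_irrefl: "tournament_on V T \<Longrightarrow> x \<in> V \<Longrightarrow> \<not> T x x"
  unfolding tournament_on_def by simp

lemma tournament_on_iff:
  assumes "tournament_on V T" "x \<in> V" "y \<in> V" "x \<noteq> y"
  shows "T x y \<longleftrightarrow> \<not> T y x"
  using assms unfolding tournament_on_def by blast

lemma tournament_on_converse:
  "tournament_on V T \<Longrightarrow> tournament_on V (\<lambda>x y. T y x)"
  unfolding tournament_on_def by blast

lemma contains_TT_mono:
  "contains_TT l W T \<Longrightarrow> W \<subseteq> V \<Longrightarrow> contains_TT l V T"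
  unfolding contains_TT_def by (meson order_trans)

lemma contains_TT_of_chain:
  assumes "\<And>i. i < l \<Longrightarrow> a i \<in> V" "\<And>i j. i < j \<Longrightarrow> j < l \<Longrightarrow> T (a i) (a j)"
    and "\<And>x. x \<in> V \<Longrightarrow> \<not> T x x"
  shows "contains_TT l V T"
proof -
  have "inj_on a {0..<l}"
  proof (rule inj_onI)
    fix i j assume ij: "i \<in> {0..<l}" "j \<in> {0..<l}" "a i = a j"
    show "i = j"
    proof (rule ccontr)
      assume "i \<noteq> j"
      then have "T (a i) (a j) \<or> T (a j) (a i)"
        using ij(1,2) assms(2) by (cases "i < j") auto
      then show False
        using ij assms(1,3) by auto
    qed
  qed
  then show ?thesis
    unfolding contains_TT_def using assms(1,2) by (intro exI[of _ a]) auto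
qed

lemma contains_TT_converse:
  assumes "contains_TT l V T"
  shows "contains_TT l V (\<lambda>x y. T y x)"
proof -
  obtain f where f: "inj_on f {0..<l}" "f ` {0..<l} \<subseteq> V"
      "\<forall>i<l. \<forall>j<l. i < j \<longrightarrow> T (f i) (f j)"
    using assms unfolding contains_TT_def by blast
  define g where "g i = f (l - 1 - i)" for i
  have "inj_on g {0..<l}"
  proof (rule inj_onI)
    fix i j assume ij: "i \<in> {0..<l}" "j \<in> {0..<l}" "g i = g j"
    then have "l - 1 - i = l - 1 - j"
      using inj_onD[OF f(1)] by (simp add: g_def)
    with ij show "i = j" by auto
  qed
  moreover have "g ` {0..<l} \<subseteq> V"
    using f(2) by (auto simp: g_def)
  moreover have "\<forall>i<l. \<forall>j<l. i < j \<longrightarrow> T (g j) (g i)"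
    using f(3) by (auto simp: g_def)
  ultimately show ?thesis
    unfolding contains_TT_def by blast
qed

lemma contains_TT_Suc_source:
  assumes "contains_TT l U T" "U \<subseteq> V" "v \<in> V - U" "\<forall>u\<in>U. T v u"
  shows "contains_TT (Suc l) V T"
proof -
  obtain f where f: "inj_on f {0..<l}" "f ` {0..<l} \<subseteq> U"
      "\<forall>i<l. \<forall>j<l. i < j \<longrightarrow> T (f i) (f j)"
    using assms(1) unfolding contains_TT_def by blast
  define g where "g i = (if i = 0 then v else f (i - 1))" for i
  have "inj_on g {0..<Suc l}"
  proof (rule inj_onI)
    fix i j assume ij: "i \<in> {0..<Suc l}" "j \<in> {0..<Suc l}" "g i = g j"
    have "g k \<in> U" if "k \<in> {0..<Suc l}" "k \<noteq> 0" for k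
      using that f(2) by (auto simp: g_def image_subset_iff)
    then have zero: "i = 0 \<longleftrightarrow> j = 0"
      using ij assms(3) by (metis DiffD2 g_def)
    show "i = j"
    proof (cases "i = 0")
      case False
      with zero ij have "f (i - 1) = f (j - 1)" "i - 1 < l" "j - 1 < l"
        by (auto simp: g_def)
      then have "i - 1 = j - 1"
        using inj_onD[OF f(1)] by simp
      with False zero show ?thesis by simp
    qed (use zero in simp)
  qed
  moreover have "g ` {0..<Suc l} \<subseteq> V"
    using f(2) assms(2,3) by (force simp: g_def image_subset_iff)
  moreover have "T (g i) (g j)" if "i < j" "j < Suc l" for i j
  proof (cases "i = 0")
    case True
    then show ?thesis
      using that f(2) assms(4) by (auto simp: g_def image_subset_iff)
  next
    case False
    then show ?thesis
      using that f(3) by (auto simp: g_def)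
  qed
  ultimately show ?thesis
    unfolding contains_TT_def by auto
qed

lemma contains_TT_if_card_ge:
  assumes "finite V" "tournament_on V T" "2 ^ l \<le> card V"
  shows "contains_TT (Suc l) V T"
  using assms
proof (induction l arbitrary: V T)
  case 0
  then obtain v where "v \<in> V"
    by fastforce
  then show ?case
    unfolding contains_TT_def by (intro exI[of _ "\<lambda>_. v"]) auto
next
  case (Suc l)
  then obtain v where v: "v \<in> V"
    by fastforce
  define Out where "Out = {u \<in> V. T v u}"
  define In where "In = {u \<in> V. T u v}"
  have sub: "Out \<subseteq> V" "In \<subseteq> V"
    unfolding Out_def In_def by auto
  have v_notin: "v \<notin> Out" "v \<notin> In"
    using Suc.prems(2) v unfolding Out_def In_def tournament_on_def by auto
  have "V - {v} \<subseteq> Out \<union> In"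
    using Suc.prems(2) v unfolding tournament_on_def Out_def In_def by blast
  then have "card V - 1 \<le> card Out + card In"
    using Suc.prems(1) v card_Un_le[of Out In] card_mono[of "Out \<union> In" "V - {v}"]
    by (simp add: Out_def In_def)
  with Suc.prems(3) consider "2 ^ l \<le> card Out" | "2 ^ l \<le> card In"
    by fastforce
  then show ?case
  proof cases
    case 1
    have "contains_TT (Suc l) Out T"
      using Suc.IH[OF _ tournament_on_subset[OF Suc.prems(2) sub(1)] 1]
        finite_subset[OF sub(1) Suc.prems(1)] by blast
    then show ?thesis
      by (rule contains_TT_Suc_source) (use v v_notin in \<open>auto simp: Out_def\<close>)
  next
    case 2
    have "contains_TT (Suc l) In (\<lambda>x y. T y x)"
      using Suc.IH[OF _ tournament_on_subset[OF tournament_on_converse[OF Suc.prems(2)] sub(2)] 2]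
        finite_subset[OF sub(2) Suc.prems(1)] by blast
    then have "contains_TT (Suc (Suc l)) V (\<lambda>x y. T y x)"
      by (rule contains_TT_Suc_source) (use v v_notin in \<open>auto simp: In_def\<close>)
    then show ?thesis
      using contains_TT_converse by fastforce
  qed
qed

lemma dir_ramsey_exists:
  assumes "1 \<le> l"
  shows "\<exists>N. \<forall>M\<ge>N. \<forall>T :: nat \<Rightarrow> nat \<Rightarrow> bool.
    tournament_on {0..<M} T \<longrightarrow> contains_TT l {0..<M} T"
proof (intro exI allI impI)
  fix M and T :: "nat \<Rightarrow> nat \<Rightarrow> bool"
  assume "2 ^ (l - 1) \<le> M" "tournament_on {0..<M} T"
  then have "contains_TT (Suc (l - 1)) {0..<M} T"
    by (intro contains_TT_if_card_ge) auto
  then show "contains_TT l {0..<M} T"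
    using assms by simp
qed

lemma dir_ramsey_pos:
  assumes "1 \<le> l"
  shows "1 \<le> dir_ramsey l"
proof (rule ccontr)
  assume "\<not> 1 \<le> dir_ramsey l"
  then have empty: "{0..<dir_ramsey l} = {}"
    by simp
  have "\<forall>M\<ge>dir_ramsey l. \<forall>T :: nat \<Rightarrow> nat \<Rightarrow> bool.
      tournament_on {0..<M} T \<longrightarrow> contains_TT l {0..<M} T"
    unfolding dir_ramsey_def by (rule LeastI_ex[OF dir_ramsey_exists[OF assms]])
  moreover have "tournament_on {0..<dir_ramsey l} (\<lambda>_ _. False)"
    unfolding empty tournament_on_def by simp
  ultimately have "contains_TT l {0..<dir_ramsey l} (\<lambda>_ _. False)"
    by blast
  then show False
    using assms unfolding empty contains_TT_def by (auto simp: image_subset_iff)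
qed

lemma dir_ramsey_extremal_tournament:
  assumes "1 \<le> l"
  obtains T where "tournament_on {0..<dir_ramsey l - 1} T"
    "\<not> contains_TT l {0..<dir_ramsey l - 1} T"
proof -
  have "dir_ramsey l - 1 < dir_ramsey l"
    using dir_ramsey_pos[OF assms] by simp
  then have "\<not> (\<forall>M\<ge>dir_ramsey l - 1. \<forall>T :: nat \<Rightarrow> nat \<Rightarrow> bool.
      tournament_on {0..<M} T \<longrightarrow> contains_TT l {0..<M} T)"
    unfolding dir_ramsey_def by (rule not_less_Least)
  then obtain M T where M: "dir_ramsey l - 1 \<le> M" and "tournament_on {0..<M} T"
      "\<not> contains_TT l {0..<M} T"
    by auto
  moreover have "{0..<dir_ramsey l - 1} \<subseteq> {0..<M}"
    using M by auto
  ultimately show thesis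
    using that tournament_on_subset contains_TT_mono by blast
qed

lemma embeds_mono: "embeds VG EG L P \<Longrightarrow> L \<le> N \<Longrightarrow> embeds VG EG N P"
  unfolding embeds_def by fastforce

lemma embeds_if_homogeneous:
  assumes "finite VG" "\<forall>e\<in>EG. e \<subseteq> VG \<and> card e = 3"
    and "finite S" "S \<subseteq> {0..<N}" "card VG \<le> card S"
    and "\<And>e. e \<subseteq> S \<Longrightarrow> card e = 3 \<Longrightarrow> P e"
  shows "embeds VG EG N P"
proof -
  obtain g where g: "g ` VG \<subseteq> S" "inj_on g VG"
    using card_le_inj[OF assms(1,3,5)] by blast
  have "P (g ` e)" if "e \<in> EG" for e
  proof -
    have "e \<subseteq> VG" "card e = 3"
      using that assms(2) by auto
    then show ?thesis
      using g by (intro assms(6)) (auto simp: card_image inj_on_subset)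
  qed
  then show ?thesis
    unfolding embeds_def using g assms(4) by (intro exI[of _ g]) auto
qed

lemma ramsey3_exists:
  assumes "finite VG" "\<forall>e\<in>EG. e \<subseteq> VG \<and> card e = 3"
    and "finite VH" "\<forall>e\<in>EH. e \<subseteq> VH \<and> card e = 3"
  shows "\<exists>N. \<forall>c. embeds VG EG N c \<or> embeds VH EH N (\<lambda>e. \<not> c e)"
proof -
  define K where "K = max (card VG) (card VH)"
  obtain N :: nat where N: "partn_lst {..<N} [K, K] 3"
    using ramsey_full by blast
  have "embeds VG EG N c \<or> embeds VH EH N (\<lambda>e. \<not> c e)" for c
  proof -
    have "(\<lambda>e. if c e then 0 else 1) \<in> nsets {..<N} 3 \<rightarrow> {..<length [K, K]}"
      by auto
    then obtain i S where i: "i < length [K, K]" and S: "S \<in> nsets {..<N} ([K, K] ! i)"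
        and mono: "(\<lambda>e. if c e then 0 else 1) ` nsets S 3 \<subseteq> {i}"
      using partn_lstE[OF N] by blast
    have "[K, K] ! i = K"
      using i by (cases i) auto
    then have S_props: "finite S" "S \<subseteq> {0..<N}" "card S = K"
      using S by (auto simp: nsets_def)
    have colour: "c e \<longleftrightarrow> i = 0" if "e \<subseteq> S" "card e = 3" for e
    proof -
      have "e \<in> nsets S 3"
        using that card.infinite by (fastforce simp: nsets_def)
      then have "(if c e then 0 else 1) = i"
        using subsetD[OF mono imageI[of e]] by simp
      then show ?thesis
        by (cases "c e") auto
    qed
    show ?thesis
    proof (cases "i = 0")
      case True
      then have "embeds VG EG N c"
        using colour S_props(3)
        by (intro embeds_if_homogeneous[OF assms(1,2) S_props(1,2)]) (auto simp: K_def)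
      then show ?thesis ..
    next
      case False
      then have "embeds VH EH N (\<lambda>e. \<not> c e)"
        using colour S_props(3)
        by (intro embeds_if_homogeneous[OF assms(3,4) S_props(1,2)]) (auto simp: K_def)
      then show ?thesis ..
    qed
  qed
  then show ?thesis
    by blast
qed

lemma less_ramsey3:
  assumes "finite VG" "\<forall>e\<in>EG. e \<subseteq> VG \<and> card e = 3"
    and "finite VH" "\<forall>e\<in>EH. e \<subseteq> VH \<and> card e = 3"
    and "\<not> embeds VG EG N c" "\<not> embeds VH EH N (\<lambda>e. \<not> c e)"
  shows "N < ramsey3 VG EG VH EH"
proof -
  have "\<forall>c. embeds VG EG (ramsey3 VG EG VH EH) c \<or> embeds VH EH (ramsey3 VG EG VH EH) (\<lambda>e. \<not> c e)"
    unfolding ramsey3_def using ramsey3_exists[OF assms(1-4)] by (rule LeastI_ex)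
  then show ?thesis
    using assms(5,6) embeds_mono by (metis not_less)
qed

lemma tight_path_uniform: "\<forall>e\<in>tight_path_E n. e \<subseteq> tight_path_V n \<and> card e = 3"
  unfolding tight_path_E_def tight_path_V_def by auto

lemma HTT_uniform: "\<forall>e\<in>HTT_E chi m. e \<subseteq> HTT_V chi m \<and> card e = 3"
  unfolding HTT_E_def HTT_V_def by auto

definition blue_triple :: "('v \<Rightarrow> 'b) \<Rightarrow> ('b \<Rightarrow> 'b \<Rightarrow> bool) \<Rightarrow> 'v set \<Rightarrow> bool" where
  "blue_triple B T e \<longleftrightarrow>
     (\<exists>x y z. e = {x, y, z} \<and> B x \<noteq> B y \<and> B y \<noteq> B z \<and> B x \<noteq> B z) \<or>
     (\<exists>x x' y. e = {x, x', y} \<and> x \<noteq> x' \<and> B x = B x' \<and> T (B x) (B y))"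

definition red_blocks :: "('b \<Rightarrow> 'b \<Rightarrow> bool) \<Rightarrow> 'b \<Rightarrow> 'b \<Rightarrow> 'b \<Rightarrow> bool" where
  "red_blocks T a b c \<longleftrightarrow> (a = b \<or> a = c \<or> b = c) \<and>
     (a = b \<longrightarrow> \<not> T a c) \<and> (a = c \<longrightarrow> \<not> T a b) \<and> (b = c \<longrightarrow> \<not> T b a)"

lemma red_triple_pair_loses:
  assumes "\<not> blue_triple B T {x, x', y}" "x \<noteq> x'" "B x = B x'"
  shows "\<not> T (B x) (B y)"
proof
  assume "T (B x) (B y)"
  then have "blue_triple B T {x, x', y}"
    unfolding blue_triple_def using assms(2,3)
    by (intro disjI2 exI[of _ x] exI[of _ x'] exI[of _ y]) auto
  with assms(1) show False ..
qed

lemma red_triple_red_blocks: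
  assumes "\<not> blue_triple B T {x, y, z}" "x \<noteq> y" "x \<noteq> z" "y \<noteq> z"
  shows "red_blocks T (B x) (B y) (B z)"
proof -
  have "\<not> blue_triple B T {x, z, y}" "\<not> blue_triple B T {y, z, x}"
    using assms(1) by (simp_all add: insert_commute)
  moreover have "B x = B y \<or> B x = B z \<or> B y = B z"
    using assms(1) unfolding blue_triple_def by auto
  ultimately show ?thesis
    unfolding red_blocks_def using red_triple_pair_loses assms by metis
qed

lemma blue_triple_pair_beats:
  assumes "blue_triple B T {x, x', y}" "x \<noteq> x'" "x \<noteq> y" "x' \<noteq> y" "B x = B x'"
    and "\<not> T (B x) (B x)"
  shows "T (B x) (B y)"
proof -
  have blocks: "B ` {x, x', y} = {B x, B y}"
    using assms(5) by auto
  from assms(1) consider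
      (rainbow) u v w where "{x, x', y} = {u, v, w}" "B u \<noteq> B v" "B v \<noteq> B w" "B u \<noteq> B w"
    | (pair) u u' w where "{x, x', y} = {u, u', w}" "u \<noteq> u'" "B u = B u'" "T (B u) (B w)"
    unfolding blue_triple_def by blast
  then show ?thesis
  proof cases
    case rainbow
    then have "B u \<in> {B x, B y}" "B v \<in> {B x, B y}" "B w \<in> {B x, B y}"
      using blocks by blast+
    then show ?thesis
      using rainbow(2-4) by auto
  next
    case pair
    have u: "u \<in> {x, x', y}" "u' \<in> {x, x', y}" and "w \<in> {x, x', y}"
      using pair(1) by auto
    show ?thesis
    proof (cases "B u = B x")
      case True
      moreover have "B w \<in> {B x, B y}"
        using \<open>w \<in> {x, x', y}\<close> assms(5) by auto
      ultimately show ?thesis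
        using pair(4) assms(6) by auto
    next
      case False
      then have "u = y" "u' = y"
        using u pair(3) assms(5) by auto
      with pair(2) show ?thesis
        by simp
    qed
  qed
qed

lemma ex_collision_if_card_lt:
  assumes "f ` {0..<m} \<subseteq> R" "finite R" "card R < m"
  shows "\<exists>k k'. k < m \<and> k' < m \<and> k \<noteq> k' \<and> f k = f k'"
proof -
  have "card (f ` {0..<m}) < card {0..<m}"
    using card_mono[OF assms(2,1)] assms(3) by simp
  then have "\<not> inj_on f {0..<m}"
    by (rule pigeonhole)
  then obtain k k' where "k < m" "k' < m" "k \<noteq> k'" "f k = f k'"
    unfolding inj_on_def by auto
  then show ?thesis
    by (intro exI[of _ k] exI[of _ k']) auto
qed

lemma blue_HTT_contains_TT:
  assumes "embeds (HTT_V chi m) (HTT_E chi m) N (blue_triple B T)"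
    and "B ` {0..<N} \<subseteq> R" "finite R" "card R < m" "\<And>p. p \<in> R \<Longrightarrow> \<not> T p p"
  shows "contains_TT chi R T"
proof -
  obtain g where g: "inj_on g (HTT_V chi m)" "g ` HTT_V chi m \<subseteq> {0..<N}"
      "\<And>e. e \<in> HTT_E chi m \<Longrightarrow> blue_triple B T (g ` e)"
    using assms(1) unfolding embeds_def by blast
  have B_R: "B (g (i, k)) \<in> R" if "i < chi" "k < m" for i k
  proof -
    have "(i, k) \<in> HTT_V chi m"
      using that unfolding HTT_V_def by simp
    then show ?thesis
      using g(2) assms(2) by blast
  qed
  have "\<exists>k k'. k < m \<and> k' < m \<and> k \<noteq> k' \<and> B (g (i, k)) = B (g (i, k'))" if "i < chi" for i
    using B_R that assms(3,4) by (intro ex_collision_if_card_lt) auto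
  then obtain k k' where kk: "\<And>i. i < chi \<Longrightarrow>
      k i < m \<and> k' i < m \<and> k i \<noteq> k' i \<and> B (g (i, k i)) = B (g (i, k' i))"
    by metis
  show ?thesis
  proof (rule contains_TT_of_chain[where a = "\<lambda>i. B (g (i, k i))"])
    show "B (g (i, k i)) \<in> R" if "i < chi" for i
      using B_R kk that by blast
    show "T (B (g (i, k i))) (B (g (j, k j)))" if "i < j" "j < chi" for i j
    proof -
      have "{(i, k i), (i, k' i), (j, k j)} \<in> HTT_E chi m"
        unfolding HTT_E_def
        by (intro CollectI exI conjI refl) (use kk that in auto)
      then have "blue_triple B T (g ` {(i, k i), (i, k' i), (j, k j)})"
        by (rule g(3))
      then have blue: "blue_triple B T {g (i, k i), g (i, k' i), g (j, k j)}"
        by simp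
      have mem: "(i, k i) \<in> HTT_V chi m" "(i, k' i) \<in> HTT_V chi m" "(j, k j) \<in> HTT_V chi m"
        using kk that unfolding HTT_V_def by auto
      have "g (i, k i) \<noteq> g (i, k' i)" "g (i, k i) \<noteq> g (j, k j)" "g (i, k' i) \<noteq> g (j, k j)"
        using inj_on_eq_iff[OF g(1) mem(1) mem(2)] inj_on_eq_iff[OF g(1) mem(1) mem(3)]
          inj_on_eq_iff[OF g(1) mem(2) mem(3)] kk that by auto
      then show ?thesis
        by (rule blue_triple_pair_beats[OF blue]) (use kk that assms(5) B_R in auto)
    qed
  qed (use assms(5) in blast)
qed

lemma card_ge_two_thirds:
  assumes "\<And>k. k < K \<Longrightarrow>
      (P (3 * k) \<and> P (3 * k + 1)) \<or> (P (3 * k) \<and> P (3 * k + 2)) \<or> (P (3 * k + 1) \<and> P (3 * k + 2))"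
  shows "2 * K \<le> card {j. j < 3 * K \<and> P j}"
  using assms
proof (induction K)
  case 0
  then show ?case by simp
next
  case (Suc K)
  define W where "W = {j. 3 * K \<le> j \<and> j < 3 * K + 3 \<and> P j}"
  have "finite W"
    unfolding W_def by simp
  then have two: "2 \<le> card W" if "x \<in> W" "y \<in> W" "x \<noteq> y" for x y
    using card_mono[of W "{x, y}"] that by simp
  have "2 \<le> card W"
    using Suc.prems[of K] two[of "3 * K" "3 * K + 1"] two[of "3 * K" "3 * K + 2"]
      two[of "3 * K + 1" "3 * K + 2"]
    unfolding W_def by auto
  moreover have "2 * K \<le> card {j. j < 3 * K \<and> P j}"
    using Suc by simp
  moreover have "{j. j < 3 * Suc K \<and> P j} = {j. j < 3 * K \<and> P j} \<union> W"
    unfolding W_def by auto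
  moreover have "card ({j. j < 3 * K \<and> P j} \<union> W) = card {j. j < 3 * K \<and> P j} + card W"
    using \<open>finite W\<close> by (intro card_Un_disjoint) (auto simp: W_def)
  ultimately show ?case
    by simp
qed

(* If p holds two places of the first window and q the third, red forces q -> p; then the
   next window cannot hold q twice, since that would force p -> q. *)
lemma red_blocks_majority_step:
  assumes "tournament_on R T" "a1 \<in> R" "a2 \<in> R"
    and "red_blocks T a0 a1 a2" "red_blocks T a1 a2 a3"
    and "(a0 = p \<and> a1 = p) \<or> (a0 = p \<and> a2 = p) \<or> (a1 = p \<and> a2 = p)"
  shows "(a1 = p \<and> a2 = p) \<or> (a1 = p \<and> a3 = p) \<or> (a2 = p \<and> a3 = p)"
  using assms(4-6) tournament_on_iff[OF assms(1-3)] unfolding red_blocks_def by auto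

lemma red_walk_majority:
  fixes b :: "nat \<Rightarrow> 'b"
  assumes "tournament_on R T" "\<And>i. i < n \<Longrightarrow> b i \<in> R"
    and "\<And>i. i + 2 < n \<Longrightarrow> red_blocks T (b i) (b (i + 1)) (b (i + 2))"
  obtains p where "\<And>i. i + 2 < n \<Longrightarrow>
    (b i = p \<and> b (i + 1) = p) \<or> (b i = p \<and> b (i + 2) = p) \<or> (b (i + 1) = p \<and> b (i + 2) = p)"
proof -
  define p where "p = (if b 1 = b 2 then b 1 else b 0)"
  have "(b i = p \<and> b (i + 1) = p) \<or> (b i = p \<and> b (i + 2) = p) \<or> (b (i + 1) = p \<and> b (i + 2) = p)"
    if "i + 2 < n" for i
    using that
  proof (induction i)
    case 0
    then have "b 0 = b 1 \<or> b 0 = b 2 \<or> b 1 = b 2"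
      using assms(3)[of 0] unfolding red_blocks_def by (simp add: numeral_2_eq_2)
    then show ?case
      unfolding p_def by (auto simp: numeral_2_eq_2)
  next
    case (Suc i)
    then have "i + 3 < n"
      by simp
    then have "b (i + 1) \<in> R" "b (i + 2) \<in> R"
      and "red_blocks T (b i) (b (i + 1)) (b (i + 2))"
      and "red_blocks T (b (i + 1)) (b (i + 2)) (b (i + 3))"
      using assms(2)[of "i + 1"] assms(2)[of "i + 2"] assms(3)[of i] assms(3)[of "i + 1"]
      by (simp_all add: numeral_3_eq_3)
    moreover have "(b i = p \<and> b (i + 1) = p) \<or> (b i = p \<and> b (i + 2) = p) \<or> (b (i + 1) = p \<and> b (i + 2) = p)"
      using Suc by simp
    ultimately have "(b (i + 1) = p \<and> b (i + 2) = p) \<or> (b (i + 1) = p \<and> b (i + 3) = p)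
        \<or> (b (i + 2) = p \<and> b (i + 3) = p)"
      by (rule red_blocks_majority_step[OF assms(1)])
    then show ?case
      by (simp add: numeral_3_eq_3)
  qed
  then show thesis
    by (rule that)
qed

lemma red_tight_path_fills_block:
  assumes "tournament_on R T" "B ` {0..<N} \<subseteq> R"
    and "embeds (tight_path_V n) (tight_path_E n) N (\<lambda>e. \<not> blue_triple B T e)"
  obtains p where "2 * (n div 3) \<le> card {x \<in> {0..<N}. B x = p}"
proof -
  obtain g where g: "inj_on g {0..<n}" "g ` {0..<n} \<subseteq> {0..<N}"
      and red: "\<And>e. e \<in> tight_path_E n \<Longrightarrow> \<not> blue_triple B T (g ` e)"
    using assms(3) unfolding embeds_def tight_path_V_def by blast
  define b where "b i = B (g i)" for i
  have g_N: "g i \<in> {0..<N}" if "i < n" for i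
    using that by (intro subsetD[OF g(2)] imageI) simp
  have red_window: "\<not> blue_triple B T (g ` {i, i + 1, i + 2})" if "i + 2 < n" for i
    using that by (intro red) (auto simp: tight_path_E_def)
  obtain p where maj: "\<And>i. i + 2 < n \<Longrightarrow>
      (b i = p \<and> b (i + 1) = p) \<or> (b i = p \<and> b (i + 2) = p) \<or> (b (i + 1) = p \<and> b (i + 2) = p)"
  proof (rule red_walk_majority[where b = b and n = n, OF assms(1)])
    show "b i \<in> R" if "i < n" for i
      using assms(2) g_N[OF that] unfolding b_def by auto
    show "red_blocks T (b i) (b (i + 1)) (b (i + 2))" if "i + 2 < n" for i
    proof -
      have "\<not> blue_triple B T {g i, g (i + 1), g (i + 2)}"
        using red_window[OF that] by simp
      moreover have "g i \<noteq> g (i + 1)" "g i \<noteq> g (i + 2)" "g (i + 1) \<noteq> g (i + 2)"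
        using inj_on_eq_iff[OF g(1)] that by auto
      ultimately show ?thesis
        unfolding b_def by (rule red_triple_red_blocks)
    qed
  qed (rule that)
  have "2 * (n div 3) \<le> card {j. j < 3 * (n div 3) \<and> b j = p}"
  proof (rule card_ge_two_thirds)
    fix k assume "k < n div 3"
    then have "3 * k + 2 < n"
      by presburger
    then show "(b (3 * k) = p \<and> b (3 * k + 1) = p) \<or> (b (3 * k) = p \<and> b (3 * k + 2) = p)
        \<or> (b (3 * k + 1) = p \<and> b (3 * k + 2) = p)"
      by (rule maj)
  qed
  also have "\<dots> = card (g ` {j. j < 3 * (n div 3) \<and> b j = p})"
    by (intro card_image[symmetric] inj_on_subset[OF g(1)]) auto
  also have "\<dots> \<le> card {x \<in> {0..<N}. B x = p}"
    using g_N by (intro card_mono) (auto simp: b_def)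
  finally show thesis
    by (rule that)
qed

lemma card_div_fibre_le:
  assumes "0 < s"
  shows "card {x \<in> A. (x::nat) div s = p} \<le> s"
proof -
  have "{x \<in> A. x div s = p} \<subseteq> {p * s..<p * s + s}"
  proof
    fix x assume "x \<in> {x \<in> A. x div s = p}"
    moreover have "x div s * s \<le> x" "x < s + x div s * s"
      using dividend_less_div_times[OF assms] by simp_all
    ultimately show "x \<in> {p * s..<p * s + s}"
      by (simp add: add.commute)
  qed
  then have "card {x \<in> A. x div s = p} \<le> card {p * s..<p * s + s}"
    by (rule card_mono[rotated]) simp
  then show ?thesis
    by simp
qed

lemma two_thirds_minus_three_le:
  assumes "3 \<le> n"
  shows "2/3 * real n - 3 \<le> real (2 * (n div 3) - 1)"
proof -
  have "n \<le> 3 * (n div 3) + 2" "1 \<le> n div 3"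
    using assms by presburger+
  then show ?thesis
    by (simp add: of_nat_diff)
qed

lemma ramsey3_tight_path_HTT_gt:
  assumes "tournament_on {0..<r} T" "\<not> contains_TT chi {0..<r} T" "r < m" "3 \<le> n"
  shows "r * (2 * (n div 3) - 1) < ramsey3 (tight_path_V n) (tight_path_E n) (HTT_V chi m) (HTT_E chi m)"
proof -
  define s where "s = 2 * (n div 3) - 1"
  have "0 < n div 3"
    using assms(4) by (simp add: div_greater_zero_iff)
  then have s: "0 < s" "s < 2 * (n div 3)"
    unfolding s_def by auto
  define B where "B x = x div s" for x :: nat
  have B_range: "B ` {0..<r * s} \<subseteq> {0..<r}"
    using s(1) by (auto simp: B_def div_less_iff_less_mult)
  have red: "\<not> embeds (tight_path_V n) (tight_path_E n) (r * s) (\<lambda>e. \<not> blue_triple B T e)"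
  proof
    assume "embeds (tight_path_V n) (tight_path_E n) (r * s) (\<lambda>e. \<not> blue_triple B T e)"
    then obtain p where "2 * (n div 3) \<le> card {x \<in> {0..<r * s}. B x = p}"
      by (rule red_tight_path_fills_block[OF assms(1) B_range])
    moreover have "card {x \<in> {0..<r * s}. B x = p} \<le> s"
      unfolding B_def using s(1) by (rule card_div_fibre_le)
    ultimately show False
      using s(2) by simp
  qed
  have blue: "\<not> embeds (HTT_V chi m) (HTT_E chi m) (r * s) (blue_triple B T)"
    using blue_HTT_contains_TT[OF _ B_range] assms(2,3) tournament_on_irrefl[OF assms(1)] by auto
  have "r * s < ramsey3 (tight_path_V n) (tight_path_E n) (HTT_V chi m) (HTT_E chi m)"
  proof (rule less_ramsey3[where c = "\<lambda>e. \<not> blue_triple B T e"])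
    show "finite (tight_path_V n)"
      by (simp add: tight_path_V_def)
    show "finite (HTT_V chi m)"
      by (simp add: HTT_V_def)
    show "\<not> embeds (HTT_V chi m) (HTT_E chi m) (r * s) (\<lambda>e. \<not> \<not> blue_triple B T e)"
      using blue by simp
  qed (fact tight_path_uniform HTT_uniform red)+
  then show ?thesis
    by (simp add: s_def)
qed

lemma eventually_ge_of_shifted_linear_bound:
  fixes f :: "nat \<Rightarrow> real"
  assumes "\<forall>\<^sub>F n in sequentially. a * (real n - b) \<le> f n" "0 \<le> a" "0 < \<epsilon>"
  shows "\<forall>\<^sub>F n in sequentially. (1 - \<epsilon>) * a * real n \<le> f n"
proof -
  have "\<forall>\<^sub>F n in sequentially. b / \<epsilon> \<le> real n"
    using filterlim_real_sequentially unfolding filterlim_at_top by blast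
  with assms(1) show ?thesis
  proof eventually_elim
    case (elim n)
    then have "b \<le> \<epsilon> * real n"
      using assms(3) by (simp add: field_simps)
    then have "a * b \<le> a * (\<epsilon> * real n)"
      using assms(2) by (rule mult_left_mono)
    then show ?case
      using elim(1) by (simp add: algebra_simps)
  qed
qed

lemma ramsey3_tight_path_HTT_lower_bound:
  assumes "1 \<le> chi" "dir_ramsey chi \<le> m" "3 \<le> n"
  shows "(2/3 * real n - 3) * (real (dir_ramsey chi) - 1) + 1
    \<le> real (ramsey3 (tight_path_V n) (tight_path_E n) (HTT_V chi m) (HTT_E chi m))"
proof -
  obtain T where T: "tournament_on {0..<dir_ramsey chi - 1} T"
      "\<not> contains_TT chi {0..<dir_ramsey chi - 1} T"
    using dir_ramsey_extremal_tournament[OF assms(1)] by blast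
  define r where "r = dir_ramsey chi - 1"
  define s where "s = 2 * (n div 3) - 1"
  have pos: "1 \<le> dir_ramsey chi"
    using dir_ramsey_pos[OF assms(1)] .
  have "r * s < ramsey3 (tight_path_V n) (tight_path_E n) (HTT_V chi m) (HTT_E chi m)"
    using ramsey3_tight_path_HTT_gt[OF T _ assms(3)] assms(2) pos unfolding r_def s_def by simp
  then have "real r * real s + 1
      \<le> real (ramsey3 (tight_path_V n) (tight_path_E n) (HTT_V chi m) (HTT_E chi m))"
    by (metis Suc_le_eq add.commute of_nat_Suc of_nat_le_iff of_nat_mult plus_1_eq_Suc)
  moreover have "(2/3 * real n - 3) * real r \<le> real s * real r"
    using two_thirds_minus_three_le[OF assms(3)] unfolding s_def by (rule mult_right_mono) simp
  moreover have "real (dir_ramsey chi) - 1 = real r"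
    using pos by (simp add: r_def of_nat_diff)
  ultimately show ?thesis
    by (simp add: mult.commute)
qed

theorem proposition1p15:
  fixes chi m :: nat
  assumes "chi \<ge> 3" and "m \<ge> dir_ramsey chi"
  shows "(\<forall>n::nat. n \<ge> 3 \<longrightarrow>
            real (ramsey3 (tight_path_V n) (tight_path_E n) (HTT_V chi m) (HTT_E chi m))
              \<ge> (2/3 * real n - 3) * (real (dir_ramsey chi) - 1) + 1)
       \<and> (\<forall>\<epsilon>>0. \<forall>\<^sub>F n in sequentially.
            real (ramsey3 (tight_path_V n) (tight_path_E n) (HTT_V chi m) (HTT_E chi m))
              \<ge> (1 - \<epsilon>) * (2/3) * (real (dir_ramsey chi) - 1) * real n)"
proof -
  let ?R = "\<lambda>n. real (ramsey3 (tight_path_V n) (tight_path_E n) (HTT_V chi m) (HTT_E chi m))"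
  let ?c = "real (dir_ramsey chi) - 1"
  have chi: "1 \<le> chi"
    using assms(1) by simp
  have lower: "(2/3 * real n - 3) * ?c + 1 \<le> ?R n" if "3 \<le> n" for n
    using ramsey3_tight_path_HTT_lower_bound[OF chi assms(2) that] .
  have "\<forall>\<^sub>F n in sequentially. (1 - \<epsilon>) * (2/3 * ?c) * real n \<le> ?R n" if "0 < \<epsilon>" for \<epsilon>
  proof (rule eventually_ge_of_shifted_linear_bound[OF _ _ that])
    show "\<forall>\<^sub>F n in sequentially. 2/3 * ?c * (real n - 9/2) \<le> ?R n"
      using eventually_ge_at_top[of 3]
    proof eventually_elim
      case (elim n)
      have "2/3 * ?c * (real n - 9/2) = (2/3 * real n - 3) * ?c"
        by (simp add: field_simps)
      with lower[OF elim] show ?case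
        by linarith
    qed
    show "0 \<le> 2/3 * ?c"
      using dir_ramsey_pos[OF chi] by simp
  qed
  with lower show ?thesis
    unfolding mult.assoc by auto
qed

end
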